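(* Let $M\in\mathbb{C}^{3\times 3}$ be nonsingular and let $s\in\mathbb{C}^3$ be a nonzero vector such that for every integer $k\ge 1$, $s$ is not a column eigenvector of $M^k$. Let $F_1,F_2,F_3\in\mathbb{C}^{2\times 3}$ with $\mathrm{rank}(F_i)=2$ for $1\le i\le 3$, such that the intersection of the row spaces of $F_1,F_2,F_3$ is $\{0\}$. Then for every positive integer $n$ there exist some $F\in\{F_1,F_2,F_3\}$ and some subset $S\subseteq\{FM^ks: 0\le k\le n^3\}$ with $|S|\ge n$ such that the vectors in $S$ are pairwise linearly independent. *)

theory Defs
  imports "HOL-Analysis.Analysis"
begin

fun matpow :: "'a::semiring_1^'n^'n \<Rightarrow> nat \<Rightarrow> 'a^'n^'n" where
  "matpow M 0 = mat 1"
| "matpow M (Suc k) = matpow M k ** M"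

end

theory Submission
  imports Defs
begin

text \<open>
  Suppose that for every F the vectors F M^k s (k \<le> n^3) contain fewer than n pairwise
  independent ones, i.e. the nonzero ones fall into fewer than n classes of parallel vectors.
  By Lagrange's identity, F x \<parallel> F y iff x \<times> y lies in the row space of F. The vectors
  v_k = M^k s are pairwise non-parallel because s is not an eigenvector of any M^d with d \<ge> 1,
  so v_j \<times> v_k \<noteq> 0 for j \<noteq> k; as the three row spaces meet only in 0, the triple of
  parallel classes determines k. So at most (n - 1)^3 indices have all three images nonzero,
  and each rank-2 F, having a one-dimensional kernel, annihilates at most one v_k. Thus
  n^3 + 1 \<le> (n - 1)^3 + 3, which fails for n \<ge> 2.
\<close>

definition ring_dot3 :: "'a::comm_ring^3 \<Rightarrow> 'a^3 \<Rightarrow> 'a" where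
  "ring_dot3 x y = x$1 * y$1 + x$2 * y$2 + x$3 * y$3"

definition ring_cross3 :: "'a::comm_ring^3 \<Rightarrow> 'a^3 \<Rightarrow> 'a^3" where
  "ring_cross3 x y = vector [x$2 * y$3 - x$3 * y$2, x$3 * y$1 - x$1 * y$3, x$1 * y$2 - x$2 * y$1]"

lemma ring_cross3_nth [simp]:
  "ring_cross3 x y $ 1 = x$2 * y$3 - x$3 * y$2"
  "ring_cross3 x y $ 2 = x$3 * y$1 - x$1 * y$3"
  "ring_cross3 x y $ 3 = x$1 * y$2 - x$2 * y$1"
  by (simp_all add: ring_cross3_def)

lemma vec3_eq_iff: "(x::'a^3) = y \<longleftrightarrow> x$1 = y$1 \<and> x$2 = y$2 \<and> x$3 = y$3"
  by (auto simp: vec_eq_iff forall_3)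

lemma ring_cross3_skew: "ring_cross3 y x = - ring_cross3 x y"
  by (simp add: vec3_eq_iff algebra_simps)

lemma ring_cross3_scale_same: "ring_cross3 (\<alpha> *s c) (\<beta> *s c) = 0"
  by (simp add: vec3_eq_iff algebra_simps)

lemma ring_dot3_commute: "ring_dot3 x y = ring_dot3 y x"
  by (simp add: ring_dot3_def mult.commute)

lemma ring_cross3_cross3: "ring_cross3 a (ring_cross3 x y) = ring_dot3 a y *s x - ring_dot3 a x *s y"
  by (simp add: vec3_eq_iff ring_dot3_def algebra_simps)

lemma ring_dot3_cross3_cross3:
  "ring_dot3 (ring_cross3 a b) (ring_cross3 x y) = ring_dot3 a x * ring_dot3 b y - ring_dot3 a y * ring_dot3 b x"
  by (simp add: ring_dot3_def algebra_simps)

lemma ring_cross3_cramer: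
  "ring_dot3 c (ring_cross3 a b) *s r =
     ring_dot3 r (ring_cross3 b c) *s a + ring_dot3 r (ring_cross3 c a) *s b + ring_dot3 r (ring_cross3 a b) *s c"
  by (simp add: vec3_eq_iff ring_dot3_def algebra_simps)

lemma ring_cross3_eq_0_imp_parallel:
  fixes p q :: "'a::field^3"
  assumes "p \<noteq> 0" "ring_cross3 p q = 0"
  shows "\<exists>\<mu>. q = \<mu> *s p"
proof -
  obtain i where "p$i \<noteq> 0" using assms(1) by (auto simp: vec_eq_iff)
  moreover have "\<forall>i j. p$i * q$j = q$i * p$j"
    using assms(2) by (simp add: forall_3 vec3_eq_iff algebra_simps)
  ultimately have "q = (q$i / p$i) *s p" by (auto simp: vec_eq_iff field_simps)
  then show ?thesis ..
qed

lemma obtain_ring_dot3_nonzero: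
  fixes w :: "'a::comm_ring_1^3"
  assumes "w \<noteq> 0"
  obtains c where "ring_dot3 c w \<noteq> 0"
proof -
  obtain i where "w$i \<noteq> 0" using assms by (auto simp: vec_eq_iff)
  then have "ring_dot3 (axis i 1) w \<noteq> 0"
    using exhaust_3[of i] by (auto simp: ring_dot3_def axis_def)
  then show ?thesis ..
qed

lemma ring_dot3_cross3_eq_0_imp_in_span:
  fixes a b r :: "'a::field^3"
  assumes "ring_cross3 a b \<noteq> 0" "ring_dot3 r (ring_cross3 a b) = 0"
  shows "r \<in> vec.span {a, b}"
proof -
  \<comment> \<open>Over \<open>\<complex>\<close> the form may vanish on x \<cdot> x, so rather than projecting we complete a, b
    by some c with det [a, b, c] \<noteq> 0 and apply Cramer's rule.\<close>
  obtain c where d: "ring_dot3 c (ring_cross3 a b) \<noteq> 0"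
    using obtain_ring_dot3_nonzero[OF assms(1)] by blast
  have "r = (ring_dot3 r (ring_cross3 b c) / ring_dot3 c (ring_cross3 a b)) *s a
          + (ring_dot3 r (ring_cross3 c a) / ring_dot3 c (ring_cross3 a b)) *s b"
    using arg_cong[OF ring_cross3_cramer[of c a b r], of "\<lambda>x. inverse (ring_dot3 c (ring_cross3 a b)) *s x"] d assms(2)
    by (simp add: vector_add_ldistrib divide_inverse mult.commute)
  also have "\<dots> \<in> vec.span {a, b}"
    by (intro vec.span_add vec.span_scale vec.span_base) auto
  finally show ?thesis .
qed

abbreviation pairwise_independent :: "('a::field^'n) set \<Rightarrow> bool" where
  "pairwise_independent \<equiv> pairwise (\<lambda>u v. \<not> vec.dependent {u, v})"

definition parallel2 :: "'a::comm_ring^2 \<Rightarrow> 'a^2 \<Rightarrow> bool" where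
  "parallel2 u v \<longleftrightarrow> u$1 * v$2 = u$2 * v$1"

lemma parallel2_refl: "parallel2 u u"
  by (simp add: parallel2_def mult.commute)

lemma parallel2_sym: "parallel2 u v \<Longrightarrow> parallel2 v u"
  by (simp add: parallel2_def mult.commute)

lemma parallel2_trans:
  fixes u s v :: "'a::field^2"
  assumes "parallel2 u s" "parallel2 s v" "s \<noteq> 0"
  shows "parallel2 u v"
proof -
  have "(u$1 * v$2 - u$2 * v$1) * s$1 = u$1 * (s$1 * v$2 - s$2 * v$1) + v$1 * (u$1 * s$2 - u$2 * s$1)"
    and "(u$1 * v$2 - u$2 * v$1) * s$2 = u$2 * (s$1 * v$2 - s$2 * v$1) + v$2 * (u$1 * s$2 - u$2 * s$1)"
    by (simp_all add: algebra_simps)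
  then have "(u$1 * v$2 - u$2 * v$1) * s$i = 0" for i
    using assms(1,2) exhaust_2[of i] by (auto simp: parallel2_def)
  moreover obtain i where "s$i \<noteq> 0" using assms(3) by (auto simp: vec_eq_iff)
  ultimately show ?thesis by (auto simp: parallel2_def)
qed

lemma dependent_pair_imp_parallel2:
  fixes u v :: "'a::field^2"
  assumes "vec.dependent {u, v}"
  shows "parallel2 u v"
proof (cases "u = v")
  case True
  then show ?thesis by (simp add: parallel2_refl)
next
  case False
  then have "v = 0 \<or> u \<in> vec.span {v}"
    using assms vec.independent_insert[of u "{v}"] by auto
  then show ?thesis
    by (auto simp: parallel2_def vec.span_singleton)
qed

lemma obtain_parallel_representatives:
  fixes X :: "('a::field^2) set"
  assumes "finite X"
  obtains S where "S \<subseteq> X" "pairwise_independent S"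
    "\<forall>x\<in>X. \<exists>s\<in>S. parallel2 x s"
  using assms
proof (induction X arbitrary: thesis rule: finite_induct)
  case empty
  then show ?case by auto
next
  case (insert x X)
  obtain S where S: "S \<subseteq> X" "pairwise_independent S"
    "\<forall>x\<in>X. \<exists>s\<in>S. parallel2 x s"
    using insert.IH by blast
  show ?case
  proof (cases "\<exists>s\<in>S. parallel2 x s")
    case True
    then show ?thesis using insert.prems[of S] S by blast
  next
    case False
    have "\<not> vec.dependent {x, s} \<and> \<not> vec.dependent {s, x}" if "s \<in> S" for s
      using False that dependent_pair_imp_parallel2[of x s] by (auto simp: insert_commute)
    then have "pairwise_independent (insert x S)"
      using S(2) by (simp add: pairwise_insert)
    then show ?thesis
      using insert.prems[of "insert x S"] S(1,3) parallel2_refl by blast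
  qed
qed

lemma obtain_parallel_class_maps:
  fixes g :: "'j \<Rightarrow> 'i \<Rightarrow> 'a::field^2"
  assumes "finite K" "\<And>F k. F \<in> J \<Longrightarrow> k \<in> K \<Longrightarrow> g F k \<noteq> 0"
  obtains r where "\<And>F. r F ` K \<subseteq> g F ` K" "\<And>F. pairwise_independent (r F ` K)"
    "\<And>F j k. F \<in> J \<Longrightarrow> j \<in> K \<Longrightarrow> k \<in> K \<Longrightarrow> r F j = r F k \<Longrightarrow> parallel2 (g F j) (g F k)"
proof -
  define P where "P F S \<longleftrightarrow> S \<subseteq> g F ` K \<and> pairwise_independent S \<and>
    (\<forall>x\<in>g F ` K. \<exists>s\<in>S. parallel2 x s)" for F S
  define S where "S F = (SOME S. P F S)" for F
  have S: "P F (S F)" for F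
  proof -
    obtain S where "S \<subseteq> g F ` K" "pairwise_independent S"
      "\<forall>x\<in>g F ` K. \<exists>s\<in>S. parallel2 x s"
      by (rule obtain_parallel_representatives[OF finite_imageI[OF assms(1)]])
    then have "P F S"
      unfolding P_def by simp
    then show ?thesis
      unfolding S_def by (rule someI)
  qed
  define r where "r F k = (SOME s. s \<in> S F \<and> parallel2 (g F k) s)" for F k
  have r: "r F k \<in> S F \<and> parallel2 (g F k) (r F k)" if "k \<in> K" for F k
  proof -
    have "\<exists>s. s \<in> S F \<and> parallel2 (g F k) s"
      using S[of F] that unfolding P_def by blast
    then show ?thesis
      unfolding r_def by (rule someI_ex)
  qed
  show ?thesis
  proof (rule that)
    fix F
    have "r F ` K \<subseteq> S F"
      using r by blast
    then show "r F ` K \<subseteq> g F ` K" "pairwise_independent (r F ` K)"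
      using S[of F] pairwise_subset unfolding P_def by auto
  next
    fix F j k
    assume F: "F \<in> J" and j: "j \<in> K" and k: "k \<in> K" and eq: "r F j = r F k"
    show "parallel2 (g F j) (g F k)"
    proof (rule parallel2_trans)
      show "parallel2 (g F j) (r F j)"
        using r[OF j] by blast
      show "parallel2 (r F j) (g F k)"
        using r[OF k] eq by (simp add: parallel2_sym)
      have "r F j \<in> g F ` K"
        using r[OF j] S[of F] unfolding P_def by blast
      then show "r F j \<noteq> 0"
        using assms(2)[OF F] by auto
    qed
  qed
qed

lemma matrix_vector_mult_nth_ring_dot3: "((F::'a::comm_ring_1^3^'m) *v x) $ i = ring_dot3 (F$i) x"
  by (simp add: matrix_vector_mult_def sum_3 ring_dot3_def)

lemma rows_2: "rows (F::'a^'n^2) = {F$1, F$2}"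
  by (auto simp: rows_def row_def vec_lambda_eta) (metis exhaust_2)+

lemma rank_2_imp_ring_cross3_rows_nonzero:
  fixes F :: "'a::field^3^2"
  assumes "rank F = 2"
  shows "ring_cross3 (F$1) (F$2) \<noteq> 0"
proof
  assume cross: "ring_cross3 (F$1) (F$2) = 0"
  have "\<exists>w. rows F \<subseteq> vec.span {w}"
  proof (cases "F$1 = 0")
    case True
    then show ?thesis
      by (intro exI[of _ "F$2"]) (auto simp: rows_2 vec.span_base vec.span_zero)
  next
    case False
    then obtain \<mu> where "F$2 = \<mu> *s F$1"
      using ring_cross3_eq_0_imp_parallel cross by blast
    then show ?thesis
      by (intro exI[of _ "F$1"]) (auto simp: rows_2 vec.span_base vec.span_scale)
  qed
  then obtain w where "rows F \<subseteq> vec.span {w}" ..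
  then have "vec.dim (rows F) \<le> card {w}"
    by (intro vec.dim_le_card) auto
  then show False
    using assms by (simp add: row_rank_def_gen)
qed

lemma parallel2_matrix_vector_mult_iff:
  fixes F :: "'a::comm_ring_1^3^2"
  shows "parallel2 (F *v x) (F *v y) \<longleftrightarrow>
    ring_dot3 (ring_cross3 (F$1) (F$2)) (ring_cross3 x y) = 0"
  by (simp add: parallel2_def matrix_vector_mult_nth_ring_dot3 ring_dot3_cross3_cross3 mult.commute)

lemma parallel2_imp_ring_cross3_in_row_span:
  fixes F :: "'a::field^3^2"
  assumes "rank F = 2" "parallel2 (F *v x) (F *v y)"
  shows "ring_cross3 x y \<in> vec.span (rows F)"
  using ring_dot3_cross3_eq_0_imp_in_span[OF rank_2_imp_ring_cross3_rows_nonzero[OF assms(1)]] assms(2)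
  by (simp add: parallel2_matrix_vector_mult_iff ring_dot3_commute rows_2)

lemma ring_cross3_kernel_eq_0:
  fixes F :: "'a::field^3^2"
  assumes "rank F = 2" "F *v x = 0" "F *v y = 0"
  shows "ring_cross3 x y = 0"
proof (rule ccontr)
  assume cross: "ring_cross3 x y \<noteq> 0"
  have "ring_cross3 (ring_cross3 x y) (F$i) = 0" for i
  proof -
    have "ring_dot3 (F$i) x = 0" "ring_dot3 (F$i) y = 0"
      using assms(2,3) by (metis matrix_vector_mult_nth_ring_dot3 zero_index)+
    then show ?thesis
      using ring_cross3_cross3[of "F$i" x y] ring_cross3_skew[of "F$i" "ring_cross3 x y"] by simp
  qed
  then obtain \<alpha> \<beta> where "F$1 = \<alpha> *s ring_cross3 x y" "F$2 = \<beta> *s ring_cross3 x y"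
    using ring_cross3_eq_0_imp_parallel[OF cross] by metis
  then have "ring_cross3 (F$1) (F$2) = 0"
    by (simp add: ring_cross3_scale_same)
  then show False
    using rank_2_imp_ring_cross3_rows_nonzero[OF assms(1)] by simp
qed

lemma matpow_add: "matpow M (a + b) = matpow M a ** matpow M b"
  by (induction b) (simp_all add: matrix_mul_assoc)

lemma invertible_matpow:
  fixes M :: "'a::field^'n^'n"
  assumes "invertible M"
  shows "invertible (matpow M k)"
proof (induction k)
  case 0
  show ?case unfolding invertible_def by (intro exI[of _ "mat 1"]) simp
next
  case (Suc k)
  then show ?case using assms by (simp add: invertible_mult)
qed

lemma matpow_orbit_not_parallel:
  fixes M :: "'a::field^'n^'n"
  assumes "invertible M" "\<And>k. k \<ge> 1 \<Longrightarrow> \<not> (\<exists>\<mu>. matpow M k *v s = \<mu> *s s)" "j < k"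
  shows "matpow M k *v s \<noteq> \<mu> *s (matpow M j *v s)"
proof
  assume eq: "matpow M k *v s = \<mu> *s (matpow M j *v s)"
  have "matpow M j *v (matpow M (k - j) *v s) = matpow M k *v s"
    using matpow_add[of M j "k - j"] assms(3) by (simp add: matrix_vector_mul_assoc)
  also have "\<dots> = matpow M j *v (\<mu> *s s)"
    using eq by (simp add: vector_scalar_commute)
  finally have "matpow M (k - j) *v s = \<mu> *s s"
    using inj_matrix_vector_mult[OF invertible_matpow[OF assms(1)]] by (simp add: inj_eq)
  moreover have "k - j \<ge> 1"
    using assms(3) by simp
  ultimately show False
    using assms(2) by blast
qed

lemma matpow_orbit_ring_cross3_nonzero:
  fixes M :: "'a::field^3^3"
  assumes "invertible M" "\<And>k. k \<ge> 1 \<Longrightarrow> \<not> (\<exists>\<mu>. matpow M k *v s = \<mu> *s s)" "s \<noteq> 0"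
    and "j \<noteq> k"
  shows "ring_cross3 (matpow M j *v s) (matpow M k *v s) \<noteq> 0"
proof -
  have nonzero: "matpow M i *v s \<noteq> 0" for i
    using assms(2)[of i] assms(3) by (cases "i = 0") (auto intro: exI[of _ 0])
  have "ring_cross3 (matpow M i *v s) (matpow M l *v s) \<noteq> 0" if "i < l" for i l
    using ring_cross3_eq_0_imp_parallel[OF nonzero[of i]] matpow_orbit_not_parallel[OF assms(1,2) that]
    by blast
  then show ?thesis
    using assms(4) ring_cross3_skew[of "matpow M j *v s" "matpow M k *v s"]
    by (cases "j < k") (auto simp: neq_iff)
qed

lemma parallel2_images_imp_ring_cross3_eq_0:
  fixes \<F> :: "('a::field^3^2) set"
  assumes "\<And>F. F \<in> \<F> \<Longrightarrow> rank F = 2" "(\<Inter>F\<in>\<F>. vec.span (rows F)) = {0}"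
    and "\<And>F. F \<in> \<F> \<Longrightarrow> parallel2 (F *v x) (F *v y)"
  shows "ring_cross3 x y = 0"
proof -
  have "ring_cross3 x y \<in> (\<Inter>F\<in>\<F>. vec.span (rows F))"
    using parallel2_imp_ring_cross3_in_row_span assms(1,3) by blast
  then show ?thesis
    using assms(2) by simp
qed

lemma card_kernel_indices_le_1:
  fixes F :: "'a::field^3^2"
  assumes "rank F = 2" "finite K"
    and "\<And>j k. j \<in> K \<Longrightarrow> k \<in> K \<Longrightarrow> j \<noteq> k \<Longrightarrow> ring_cross3 (v j) (v k) \<noteq> 0"
  shows "card {k\<in>K. F *v v k = 0} \<le> 1"
proof -
  have "j = k" if "j \<in> K" "k \<in> K" "F *v v j = 0" "F *v v k = 0" for j k
    using assms(3)[OF that(1,2)] ring_cross3_kernel_eq_0[OF assms(1) that(3,4)] by blast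
  then show ?thesis
    using assms(2) by (simp add: card_le_Suc0_iff_eq)
qed

lemma card_jointly_nonzero_indices_le:
  fixes \<F> :: "('a::field^3^2) set" and v :: "'i \<Rightarrow> 'a^3"
  assumes "finite \<F>" "finite K"
    and rank: "\<And>F. F \<in> \<F> \<Longrightarrow> rank F = 2" and rows: "(\<Inter>F\<in>\<F>. vec.span (rows F)) = {0}"
    and cross: "\<And>j k. j \<in> K \<Longrightarrow> k \<in> K \<Longrightarrow> j \<noteq> k \<Longrightarrow> ring_cross3 (v j) (v k) \<noteq> 0"
    and small: "\<And>F S. F \<in> \<F> \<Longrightarrow> S \<subseteq> (\<lambda>k. F *v v k) ` K \<Longrightarrow>
      pairwise_independent S \<Longrightarrow> card S \<le> m"
  shows "card {k\<in>K. \<forall>F\<in>\<F>. F *v v k \<noteq> 0} \<le> m ^ card \<F>"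
proof -
  \<comment> \<open>k is sent to the tuple of its parallel classes, one per F; this map is injective.\<close>
  define G where "G = {k\<in>K. \<forall>F\<in>\<F>. F *v v k \<noteq> 0}"
  have "G \<subseteq> K"
    unfolding G_def by blast
  then have "finite G"
    using assms(2) by (rule finite_subset)
  obtain r where r: "\<And>F. r F ` G \<subseteq> (\<lambda>k. F *v v k) ` G"
    "\<And>F. pairwise_independent (r F ` G)"
    "\<And>F j k. F \<in> \<F> \<Longrightarrow> j \<in> G \<Longrightarrow> k \<in> G \<Longrightarrow> r F j = r F k \<Longrightarrow> parallel2 (F *v v j) (F *v v k)"
    using obtain_parallel_class_maps[OF \<open>finite G\<close>, of \<F> "\<lambda>F k. F *v v k"] unfolding G_def by blast
  have "inj_on (\<lambda>k. restrict (\<lambda>F. r F k) \<F>) G"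
  proof (rule inj_onI)
    fix j k assume j: "j \<in> G" and k: "k \<in> G"
      and eq: "restrict (\<lambda>F. r F j) \<F> = restrict (\<lambda>F. r F k) \<F>"
    have "parallel2 (F *v v j) (F *v v k)" if "F \<in> \<F>" for F
      using r(3)[OF that j k] fun_cong[OF eq, of F] that by simp
    then have "ring_cross3 (v j) (v k) = 0"
      using parallel2_images_imp_ring_cross3_eq_0[OF rank rows] by blast
    then show "j = k"
      using cross j k \<open>G \<subseteq> K\<close> by blast
  qed
  moreover have "(\<lambda>k. restrict (\<lambda>F. r F k) \<F>) ` G \<subseteq> Pi\<^sub>E \<F> (\<lambda>F. r F ` G)"
    by auto
  ultimately have "card G \<le> card (Pi\<^sub>E \<F> (\<lambda>F. r F ` G))"
    using \<open>finite G\<close> assms(1) by (intro card_inj_on_le) (auto intro!: finite_PiE)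
  also have "\<dots> = (\<Prod>F\<in>\<F>. card (r F ` G))"
    using assms(1) by (rule card_PiE)
  also have "\<dots> \<le> (\<Prod>F\<in>\<F>. m)"
  proof (rule prod_mono)
    fix F assume "F \<in> \<F>"
    moreover have "r F ` G \<subseteq> (\<lambda>k. F *v v k) ` K"
      using r(1)[of F] \<open>G \<subseteq> K\<close> by blast
    ultimately show "0 \<le> card (r F ` G) \<and> card (r F ` G) \<le> m"
      using small r(2) by blast
  qed
  finally show ?thesis
    by (simp add: G_def)
qed

lemma card_le_power_card_plus_card:
  fixes \<F> :: "('a::field^3^2) set" and v :: "'i \<Rightarrow> 'a^3"
  assumes "finite \<F>" "finite K"
    and rank: "\<And>F. F \<in> \<F> \<Longrightarrow> rank F = 2" and rows: "(\<Inter>F\<in>\<F>. vec.span (rows F)) = {0}"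
    and cross: "\<And>j k. j \<in> K \<Longrightarrow> k \<in> K \<Longrightarrow> j \<noteq> k \<Longrightarrow> ring_cross3 (v j) (v k) \<noteq> 0"
    and small: "\<And>F S. F \<in> \<F> \<Longrightarrow> S \<subseteq> (\<lambda>k. F *v v k) ` K \<Longrightarrow>
      pairwise_independent S \<Longrightarrow> card S \<le> m"
  shows "card K \<le> m ^ card \<F> + card \<F>"
proof -
  have "K \<subseteq> {k\<in>K. \<forall>F\<in>\<F>. F *v v k \<noteq> 0} \<union> (\<Union>F\<in>\<F>. {k\<in>K. F *v v k = 0})"
    by auto
  then have "card K \<le> card ({k\<in>K. \<forall>F\<in>\<F>. F *v v k \<noteq> 0} \<union> (\<Union>F\<in>\<F>. {k\<in>K. F *v v k = 0}))"
    using assms(1,2) by (intro card_mono) auto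
  also have "\<dots> \<le> card {k\<in>K. \<forall>F\<in>\<F>. F *v v k \<noteq> 0} + card (\<Union>F\<in>\<F>. {k\<in>K. F *v v k = 0})"
    by (rule card_Un_le)
  also have "\<dots> \<le> m ^ card \<F> + (\<Sum>F\<in>\<F>. card {k\<in>K. F *v v k = 0})"
    using card_jointly_nonzero_indices_le[OF assms] card_UN_le[OF assms(1)] by (rule add_mono)
  also have "\<dots> \<le> m ^ card \<F> + card \<F>"
    using sum_bounded_above[of \<F> "\<lambda>F. card {k\<in>K. F *v v k = 0}" 1]
      card_kernel_indices_le_1[OF rank assms(2) cross] by simp
  finally show ?thesis .
qed

lemma exists_large_pairwise_independent_image:
  fixes \<F> :: "('a::field^3^2) set" and v :: "'i \<Rightarrow> 'a^3"
  assumes "finite \<F>" "finite K"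
    and "\<And>F. F \<in> \<F> \<Longrightarrow> rank F = 2" "(\<Inter>F\<in>\<F>. vec.span (rows F)) = {0}"
    and "\<And>j k. j \<in> K \<Longrightarrow> k \<in> K \<Longrightarrow> j \<noteq> k \<Longrightarrow> ring_cross3 (v j) (v k) \<noteq> 0"
    and "m ^ card \<F> + card \<F> < card K"
  shows "\<exists>F\<in>\<F>. \<exists>S \<subseteq> (\<lambda>k. F *v v k) ` K. pairwise_independent S \<and> m < card S"
proof (rule ccontr)
  assume "\<not> ?thesis"
  then have "card S \<le> m"
    if "F \<in> \<F>" "S \<subseteq> (\<lambda>k. F *v v k) ` K" "pairwise_independent S" for F S
    using that by (meson not_le)
  note card_le_power_card_plus_card[OF assms(1-5) this]
  then show False
    using assms(6) by simp
qed

lemma pred_cube_plus_3_less: "2 \<le> (n::nat) \<Longrightarrow> (n - 1) ^ 3 + 3 < n ^ 3 + 1"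
  by (cases n) (auto simp: power3_eq_cube algebra_simps)

theorem lemma3p1:
  fixes M :: "complex^3^3" and s :: "complex^3"
    and F1 F2 F3 :: "complex^3^2" and n :: nat
  assumes "invertible M"
    and "s \<noteq> 0"
    and "\<And>k. k \<ge> 1 \<Longrightarrow> \<not> (\<exists>\<mu>. matpow M k *v s = \<mu> *s s)"
    and "rank F1 = 2" and "rank F2 = 2" and "rank F3 = 2"
    and "vec.span (rows F1) \<inter> vec.span (rows F2) \<inter> vec.span (rows F3) = {0}"
    and "n > 0"
  shows "\<exists>F \<in> {F1, F2, F3}. \<exists>S.
           S \<subseteq> {F *v (matpow M k *v s) | k. k \<le> n ^ 3} \<and> card S \<ge> n \<and>
           (\<forall>u \<in> S. \<forall>v \<in> S. u \<noteq> v \<longrightarrow> \<not> vec.dependent {u, v})"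
proof (cases "n = 1")
  case True
  show ?thesis
    by (rule bexI[of _ F1], rule exI[of _ "{F1 *v (matpow M 0 *v s)}"]) (auto simp: True intro!: exI[of _ 0])
next
  case False
  then have n: "n \<ge> 2"
    using assms(8) by simp
  have "(n - 1) ^ card {F1, F2, F3} + card {F1, F2, F3} \<le> (n - 1) ^ 3 + 3"
    using n by (intro add_mono power_increasing) (auto simp: card_insert_if)
  also have "\<dots> < card {..n ^ 3}"
    using pred_cube_plus_3_less[OF n] by simp
  finally have "\<exists>F\<in>{F1, F2, F3}. \<exists>S \<subseteq> (\<lambda>k. F *v (matpow M k *v s)) ` {..n ^ 3}.
      pairwise_independent S \<and> n - 1 < card S"
    using assms(4-7) matpow_orbit_ring_cross3_nonzero[OF assms(1,3,2)]
    by (intro exists_large_pairwise_independent_image) (auto simp: Int_assoc)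
  then obtain F S where "F \<in> {F1, F2, F3}" "S \<subseteq> (\<lambda>k. F *v (matpow M k *v s)) ` {..n ^ 3}"
    "pairwise_independent S" "n - 1 < card S"
    by blast
  then show ?thesis
    unfolding pairwise_def by (intro bexI[of _ F] exI[of _ S]) auto
qed

end
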